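(* Let $S$ be an additively reduced semidomain and $G$ a torsion-free abelian group. Let $f=\sum_{i=0}^\infty s_ix^{g_i}\in S[\![G]\!]$ with $|\operatorname{supp}(f)|>1$. Then $f$ is irreducible if and only if $f$ is monolithic and $1\in\gcd(\{s_i : i\in\mathbb{N}_0\})$.
   Context: A semidomain is a subsemiring (containing $0$ and $1$) of an integral domain; $S^\times$ is the unit group of the multiplicative monoid $S\setminus\{0\}$. $S$ is additively reduced if $0$ is the only invertible element of $(S,+)$. $G$ carries a fixed total order compatible with addition. $S[\![G]\!]=\{\sum_{i=0}^\infty s_ix^{g_i} : s_i\in S,\ g_i\in G,\ g_i<g_{i+1}\}$ with operations defined as for polynomials; elements are written so that $s_i=0$ implies $s_{i+1}=0$; $\operatorname{supp}(f)=\{g_i: s_i\neq0\}$. $f$ is irreducible if it is nonzero, a nonunit of $S[\![G]\!]$, and $f=pq$ implies $p$ or $q$ is a unit. A nonzero $f$ is monolithic if $f=pq$ with $p,q\in S[\![G]\!]$ implies one of $p,q$ is a monomial $sx^g$. For a set $B$ of elements of $S$, $1\in\gcd(B)$ means $1$ is a greatest common divisor of the nonzero elements of $B$ in the multiplicative monoid $S\setminus\{0\}$, i.e. every common divisor of them is a unit of $S$. *)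

theory Defs
  imports Main
begin

definition semidomain :: "'a::idom set \<Rightarrow> bool" where
  "semidomain S \<longleftrightarrow> 0 \<in> S \<and> 1 \<in> S \<and>
     (\<forall>a\<in>S. \<forall>b\<in>S. a + b \<in> S) \<and> (\<forall>a\<in>S. \<forall>b\<in>S. a * b \<in> S)"

definition add_reduced :: "'a::idom set \<Rightarrow> bool" where
  "add_reduced S \<longleftrightarrow> (\<forall>a\<in>S. (\<exists>b\<in>S. a + b = 0) \<longrightarrow> a = 0)"

definition sunit :: "'a::idom set \<Rightarrow> 'a \<Rightarrow> bool" where
  "sunit S u \<longleftrightarrow> u \<in> S \<and> u \<noteq> 0 \<and> (\<exists>v\<in>S. u * v = 1)"

definition sdvd :: "'a::idom set \<Rightarrow> 'a \<Rightarrow> 'a \<Rightarrow> bool" where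
  "sdvd S d a \<longleftrightarrow> (\<exists>t\<in>S. a = d * t)"

definition one_in_gcd :: "'a::idom set \<Rightarrow> 'a set \<Rightarrow> bool" where
  "one_in_gcd S B \<longleftrightarrow>
     (\<forall>d\<in>S - {0}. (\<forall>b\<in>B - {0}. sdvd S d b) \<longrightarrow> sdvd S d 1)"

text \<open>Series are represented as coefficient functions G \<Rightarrow> S.\<close>
definition supp :: "('g \<Rightarrow> 'a::zero) \<Rightarrow> 'g set" where
  "supp f = {g. f g \<noteq> 0}"

text \<open>Elements of S[[G]]: coefficients in S and support of the form
  g_0 < g_1 < ... (finite or of order type omega), i.e. each support element
  has only finitely many smaller support elements.\<close>
definition in_SG :: "'a::idom set \<Rightarrow> ('g::linordered_ab_group_add \<Rightarrow> 'a) \<Rightarrow> bool" where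
  "in_SG S f \<longleftrightarrow> (\<forall>g. f g \<in> S) \<and> (\<forall>g\<in>supp f. finite {h\<in>supp f. h < g})"

definition sg_mult :: "('g::linordered_ab_group_add \<Rightarrow> 'a::idom) \<Rightarrow> ('g \<Rightarrow> 'a) \<Rightarrow> 'g \<Rightarrow> 'a" where
  "sg_mult p q = (\<lambda>h. \<Sum>a\<in>{a\<in>supp p. h - a \<in> supp q}. p a * q (h - a))"

definition sg_one :: "'g::linordered_ab_group_add \<Rightarrow> 'a::idom" where
  "sg_one = (\<lambda>g. if g = 0 then 1 else 0)"

definition sg_unit :: "'a::idom set \<Rightarrow> ('g::linordered_ab_group_add \<Rightarrow> 'a) \<Rightarrow> bool" where
  "sg_unit S u \<longleftrightarrow> in_SG S u \<and> (\<exists>v. in_SG S v \<and> sg_mult u v = sg_one)"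

definition sg_irreducible :: "'a::idom set \<Rightarrow> ('g::linordered_ab_group_add \<Rightarrow> 'a) \<Rightarrow> bool" where
  "sg_irreducible S f \<longleftrightarrow> f \<noteq> (\<lambda>_. 0) \<and> \<not> sg_unit S f \<and>
     (\<forall>p q. in_SG S p \<and> in_SG S q \<and> f = sg_mult p q \<longrightarrow> sg_unit S p \<or> sg_unit S q)"

definition sg_monomial :: "'a::idom set \<Rightarrow> ('g::linordered_ab_group_add \<Rightarrow> 'a) \<Rightarrow> bool" where
  "sg_monomial S p \<longleftrightarrow> (\<exists>s\<in>S. \<exists>g. p = (\<lambda>h. if h = g then s else 0))"

definition sg_monolithic :: "'a::idom set \<Rightarrow> ('g::linordered_ab_group_add \<Rightarrow> 'a) \<Rightarrow> bool" where
  "sg_monolithic S f \<longleftrightarrow> f \<noteq> (\<lambda>_. 0) \<and>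
     (\<forall>p q. in_SG S p \<and> in_SG S q \<and> f = sg_mult p q \<longrightarrow> sg_monomial S p \<or> sg_monomial S q)"

end

theory Submission
  imports Defs
begin

text \<open>Over an additively reduced semidomain no cancellation can occur in a product:
  if \<open>a \<in> supp p\<close> and \<open>b \<in> supp q\<close>, the coefficient of \<open>x\<^bsup>a + b\<^esup>\<close> in \<open>p q\<close> is \<open>p\<^sub>a q\<^sub>b \<noteq> 0\<close>
  plus an element of \<open>S\<close>, hence nonzero because only \<open>0\<close> has an additive inverse in \<open>S\<close>.
  So the support of \<open>p q\<close> contains \<open>supp p + supp q\<close>, units are monomials, and \<open>f\<close> with two support points is not a unit. Then irreducibility
  of \<open>f\<close> says that every factorisation has a monomial factor (monolithic) and that every
  monomial factor is a unit, and a monomial \<open>s x\<^sup>g\<close> is a unit exactly when \<open>s\<close> is a unit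
  of \<open>S\<close>; factoring a common divisor \<open>d\<close> of the coefficients out as \<open>d x\<^sup>0\<close> turns the second
  condition into \<open>1 \<in> gcd\<close>.\<close>

abbreviation sg_monom :: "'g \<Rightarrow> 'a \<Rightarrow> 'g \<Rightarrow> 'a::zero" where
  "sg_monom g s \<equiv> (\<lambda>h. if h = g then s else 0)"

lemma semidomain_sum_closed:
  assumes "semidomain S" and "\<forall>x\<in>A. h x \<in> S"
  shows "sum h A \<in> S"
  using assms(2)
  by (induction A rule: infinite_finite_induct) (use assms(1) in \<open>auto simp: semidomain_def\<close>)

lemma in_SG_monom:
  assumes "semidomain S" and "s \<in> S"
  shows "in_SG S (sg_monom g s)"
proof -
  have "supp (sg_monom g s) \<subseteq> {g}"
    by (auto simp: supp_def)
  then have "finite (supp (sg_monom g s))"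
    using finite_subset by blast
  then show ?thesis
    using assms unfolding in_SG_def semidomain_def by auto
qed

lemma sg_mult_commute: "sg_mult p q = sg_mult q p"
proof
  fix h
  show "sg_mult p q h = sg_mult q p h"
    unfolding sg_mult_def
    by (rule sum.reindex_bij_witness[of _ "\<lambda>a. h - a" "\<lambda>a. h - a"]) (auto simp: mult.commute)
qed

lemma sg_mult_monom_left: "sg_mult (sg_monom g s) q = (\<lambda>h. s * q (h - g))"
proof
  fix h
  have "{a \<in> supp (sg_monom g s). h - a \<in> supp q} = (if s * q (h - g) = 0 then {} else {g})"
    by (auto simp: supp_def)
  then show "sg_mult (sg_monom g s) q h = s * q (h - g)"
    unfolding sg_mult_def by simp
qed

lemma sg_unit_monom_iff:
  assumes "semidomain S" and "s \<in> S"
  shows "sg_unit S (sg_monom g s) \<longleftrightarrow> sdvd S s 1"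
proof
  assume "sg_unit S (sg_monom g s)"
  then obtain v where "in_SG S v" and inverse: "sg_mult (sg_monom g s) v = sg_one"
    unfolding sg_unit_def by blast
  have "1 = s * v (- g)"
    using fun_cong[OF inverse, of 0] by (simp add: sg_mult_monom_left sg_one_def)
  moreover have "v (- g) \<in> S"
    using \<open>in_SG S v\<close> by (simp add: in_SG_def)
  ultimately show "sdvd S s 1"
    unfolding sdvd_def by blast
next
  assume "sdvd S s 1"
  then obtain t where t: "t \<in> S" "1 = s * t"
    unfolding sdvd_def by blast
  have "sg_mult (sg_monom g s) (sg_monom (- g) t) = sg_one"
    using t(2) by (auto simp: sg_mult_monom_left sg_one_def diff_eq_eq)
  then show "sg_unit S (sg_monom g s)"
    unfolding sg_unit_def using in_SG_monom assms t(1) by blast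
qed

lemma sg_factor_common_divisor:
  assumes "semidomain S" and "in_SG S f" and "d \<noteq> 0"
    and common_divisor: "\<forall>b \<in> range f - {0}. sdvd S d b"
  obtains t where "in_SG S t" and "supp t = supp f" and "f = sg_mult (sg_monom 0 d) t"
proof -
  have "\<forall>h. \<exists>t\<in>S. f h = d * t"
    using common_divisor assms(1) unfolding sdvd_def semidomain_def by (metis DiffI mult_zero_right rangeI singletonD)
  then obtain t where t: "\<And>h. t h \<in> S" "\<And>h. f h = d * t h"
    by metis
  then have "supp t = supp f"
    using \<open>d \<noteq> 0\<close> by (simp add: supp_def)
  moreover from this have "in_SG S t"
    using t(1) \<open>in_SG S f\<close> by (simp add: in_SG_def)
  moreover have "f = sg_mult (sg_monom 0 d) t"
    using t(2) by (simp add: sg_mult_monom_left fun_eq_iff)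
  ultimately show ?thesis
    using that by blast
qed

lemma finite_sg_mult_summands:
  assumes "in_SG S p" and "in_SG S q" and "a \<in> supp p" and "b \<in> supp q"
  shows "finite {a' \<in> supp p. a + b - a' \<in> supp q}"
proof (rule finite_subset)
  show "{a' \<in> supp p. a + b - a' \<in> supp q}
      \<subseteq> insert a {h \<in> supp p. h < a} \<union> (\<lambda>b'. a + b - b') ` {h \<in> supp q. h < b}"
  proof
    fix a' assume a': "a' \<in> {a' \<in> supp p. a + b - a' \<in> supp q}"
    show "a' \<in> insert a {h \<in> supp p. h < a} \<union> (\<lambda>b'. a + b - b') ` {h \<in> supp q. h < b}"
    proof (cases "a < a'")
      case True
      then have "a + b - a' < b"
        by (simp add: algebra_simps)
      moreover have "a' = a + b - (a + b - a')"
        by simp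
      ultimately show ?thesis
        using a' by blast
    qed (use a' in auto)
  qed
  show "finite (insert a {h \<in> supp p. h < a} \<union> (\<lambda>b'. a + b - b') ` {h \<in> supp q. h < b})"
    using assms unfolding in_SG_def by simp
qed

lemma sg_mult_add_supp_nonzero:
  assumes "semidomain S" and "add_reduced S" and p: "in_SG S p" and q: "in_SG S q"
    and a: "a \<in> supp p" and b: "b \<in> supp q"
  shows "sg_mult p q (a + b) \<noteq> 0"
proof
  assume zero: "sg_mult p q (a + b) = 0"
  let ?A = "{a' \<in> supp p. a + b - a' \<in> supp q}"
  let ?rest = "\<Sum>a'\<in>?A - {a}. p a' * q (a + b - a')"
  have "a \<in> ?A"
    using a b by simp
  then have "p a * q b + ?rest = 0"
    unfolding zero[symmetric] sg_mult_def
    using sum.remove[OF finite_sg_mult_summands[OF p q a b], of a "\<lambda>a'. p a' * q (a + b - a')"]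
    by simp
  moreover have coeffs: "p g \<in> S" "q g \<in> S" for g
    using p q by (auto simp: in_SG_def)
  then have "?rest \<in> S"
    using assms(1) by (intro semidomain_sum_closed) (auto simp: semidomain_def)
  moreover have "p a * q b \<in> S"
    using coeffs assms(1) by (simp add: semidomain_def)
  ultimately have "p a * q b = 0"
    using assms(2) unfolding add_reduced_def by blast
  then show False
    using a b by (simp add: supp_def)
qed

lemma sg_unit_supp_eq:
  assumes "semidomain S" and "add_reduced S" and u: "sg_unit S u"
    and "a \<in> supp u" and "c \<in> supp u"
  shows "a = c"
proof -
  obtain v where v: "in_SG S v" "sg_mult u v = sg_one" and "in_SG S u"
    using u unfolding sg_unit_def by blast
  have "supp v \<noteq> {}"
  proof
    assume "supp v = {}"
    then have "sg_mult u v 0 = 0"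
      unfolding sg_mult_def by simp
    then show False
      using v(2) by (simp add: sg_one_def)
  qed
  then obtain b where "b \<in> supp v"
    by blast
  then have "sg_mult u v (a + b) \<noteq> 0" and "sg_mult u v (c + b) \<noteq> 0"
    using sg_mult_add_supp_nonzero[OF assms(1,2) \<open>in_SG S u\<close> v(1)] assms(4,5) by blast+
  then have "a + b = 0" and "c + b = 0"
    unfolding v(2) sg_one_def by (auto split: if_splits)
  then show ?thesis
    by (metis add_right_cancel)
qed

lemma not_sg_unit_if_two_supp:
  assumes "semidomain S" and "add_reduced S"
    and "a \<in> supp f" and "b \<in> supp f" and "a \<noteq> b"
  shows "\<not> sg_unit S f"
  using sg_unit_supp_eq[OF assms(1,2)] assms(3-5) by blast

lemma sg_unit_imp_monomial:
  assumes "semidomain S" and "add_reduced S" and u: "sg_unit S u"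
  shows "sg_monomial S u"
proof (cases "supp u = {}")
  case True
  then have "u = sg_monom 0 0"
    by (auto simp: supp_def)
  then show ?thesis
    using assms(1) unfolding sg_monomial_def semidomain_def by blast
next
  case False
  then obtain g where g: "g \<in> supp u"
    by blast
  have "u = sg_monom g (u g)"
  proof
    fix h
    show "u h = sg_monom g (u g) h"
      using sg_unit_supp_eq[OF assms g, of h] by (auto simp: supp_def)
  qed
  moreover have "u g \<in> S"
    using u by (simp add: sg_unit_def in_SG_def)
  ultimately show ?thesis
    unfolding sg_monomial_def by blast
qed

lemma sg_irreducibleD:
  assumes "sg_irreducible S f" and "in_SG S p" and "in_SG S q" and "f = sg_mult p q"
  shows "sg_unit S p \<or> sg_unit S q"
  using assms unfolding sg_irreducible_def by blast

lemma sg_monolithicD: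
  assumes "sg_monolithic S f" and "in_SG S p" and "in_SG S q" and "f = sg_mult p q"
  shows "sg_monomial S p \<or> sg_monomial S q"
  using assms unfolding sg_monolithic_def by blast

lemma sg_irreducible_imp_monolithic:
  assumes "semidomain S" and "add_reduced S" and "sg_irreducible S f"
  shows "sg_monolithic S f"
  unfolding sg_monolithic_def
proof (intro conjI allI impI)
  show "f \<noteq> (\<lambda>_. 0)"
    using assms(3) unfolding sg_irreducible_def by blast
  fix p q assume "in_SG S p \<and> in_SG S q \<and> f = sg_mult p q"
  then have "sg_unit S p \<or> sg_unit S q"
    using sg_irreducibleD[OF assms(3)] by blast
  then show "sg_monomial S p \<or> sg_monomial S q"
    using sg_unit_imp_monomial[OF assms(1,2)] by blast
qed

lemma sg_irreducible_imp_one_in_gcd: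
  assumes sd: "semidomain S" and ar: "add_reduced S" and "in_SG S f"
    and two_supp: "a \<in> supp f" "b \<in> supp f" "a \<noteq> b"
    and irr: "sg_irreducible S f"
  shows "one_in_gcd S (range f)"
  unfolding one_in_gcd_def
proof (intro ballI impI)
  fix d assume d: "d \<in> S - {0}" and "\<forall>b \<in> range f - {0}. sdvd S d b"
  then obtain t where t: "in_SG S t" "supp t = supp f" "f = sg_mult (sg_monom 0 d) t"
    using sg_factor_common_divisor[OF sd \<open>in_SG S f\<close>] by blast
  have "\<not> sg_unit S t"
    using not_sg_unit_if_two_supp[OF sd ar] two_supp t(2) by blast
  moreover have "in_SG S (sg_monom 0 d)"
    using in_SG_monom[OF sd] d by blast
  ultimately show "sdvd S d 1"
    using sg_irreducibleD[OF irr _ t(1,3)] sg_unit_monom_iff[OF sd] d by blast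
qed

lemma sg_monom_factor_is_unit:
  assumes "semidomain S" and "one_in_gcd S (range f)" and "f \<noteq> (\<lambda>_. 0)"
    and "s \<in> S" and "in_SG S q" and f: "f = sg_mult (sg_monom g s) q"
  shows "sg_unit S (sg_monom g s)"
proof -
  have coeff: "f h = s * q (h - g)" for h
    using f by (simp add: sg_mult_monom_left)
  then have "s \<noteq> 0"
    using \<open>f \<noteq> (\<lambda>_. 0)\<close> by auto
  moreover have "sdvd S s (f h)" for h
    using coeff \<open>in_SG S q\<close> unfolding sdvd_def in_SG_def by blast
  ultimately have "sdvd S s 1"
    using assms(2,4) unfolding one_in_gcd_def by blast
  then show ?thesis
    using sg_unit_monom_iff[OF assms(1,4)] by blast
qed

lemma sg_monolithic_one_in_gcd_imp_irreducible:
  assumes sd: "semidomain S" and "\<not> sg_unit S f"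
    and mono: "sg_monolithic S f" and gcd: "one_in_gcd S (range f)"
  shows "sg_irreducible S f"
  unfolding sg_irreducible_def
proof (intro conjI allI impI)
  show nz: "f \<noteq> (\<lambda>_. 0)"
    using mono unfolding sg_monolithic_def by blast
  show "\<not> sg_unit S f"
    by fact
  fix p q assume "in_SG S p \<and> in_SG S q \<and> f = sg_mult p q"
  then have p: "in_SG S p" and q: "in_SG S q" and f: "f = sg_mult p q"
    by blast+
  from sg_monolithicD[OF mono p q f] show "sg_unit S p \<or> sg_unit S q"
  proof
    assume "sg_monomial S p"
    then obtain s g where "s \<in> S" and "p = sg_monom g s"
      unfolding sg_monomial_def by blast
    then show ?thesis
      using sg_monom_factor_is_unit[OF sd gcd nz _ q] f by blast
  next
    assume "sg_monomial S q"
    then obtain s g where "s \<in> S" and "q = sg_monom g s"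
      unfolding sg_monomial_def by blast
    then show ?thesis
      using sg_monom_factor_is_unit[OF sd gcd nz _ p] f sg_mult_commute[of p q] by blast
  qed
qed

theorem lemma4p1:
  fixes S :: "'a::idom set" and f :: "'g::linordered_ab_group_add \<Rightarrow> 'a"
  assumes "semidomain S" and "add_reduced S"
    and "in_SG S f"
    and "\<exists>a b. a \<in> supp f \<and> b \<in> supp f \<and> a \<noteq> b"
  shows "sg_irreducible S f \<longleftrightarrow> sg_monolithic S f \<and> one_in_gcd S (range f)"
proof -
  obtain a b where two_supp: "a \<in> supp f" "b \<in> supp f" "a \<noteq> b"
    using assms(4) by blast
  have "\<not> sg_unit S f"
    using not_sg_unit_if_two_supp[OF assms(1,2) two_supp] .
  then show ?thesis
    using sg_irreducible_imp_monolithic[OF assms(1,2)]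
      sg_irreducible_imp_one_in_gcd[OF assms(1-3) two_supp]
      sg_monolithic_one_in_gcd_imp_irreducible[OF assms(1)]
    by blast
qed

end
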